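(* Let $M$ be a connected matroid on $[n]$, $\mathcal G$ a building set of $\mathcal L_M$, and $\mathcal S$ a nested set of $\mathcal G$ with $[n]\in\mathcal S$. For $G\in\mathcal S$ let $G^-$ be the join (closure of the union) of the maximal elements of $\{H\in\mathcal S: H\subsetneq G\}$, with $G^-=\emptyset$ if this set is empty. Let $w$ be any vector in the relative interior of the cone $\mathbb R_{\ge0}\{v_G:G\in\mathcal S\}$. Then $$M_w\;=\;\bigoplus_{G\in\mathcal S} M[G^-,G].$$
   Context: A matroid $M$ of rank $r$ on $[n]$ is given by its bases; for $w\in\mathbb R^n$, $M_w$ is the matroid on $[n]$ whose bases are the bases $\sigma$ of $M$ maximizing $\sum_{i\in\sigma}w_i$. $\mathcal L_M$ is the lattice of flats (least element $\emptyset$ as $M$ is connected hence loopless, greatest $[n]$). For flats $F\subseteq G$, $M[F,G]$ is the matroid on $G\setminus F$ obtained by restricting $M$ to $G$ and contracting $F$: its bases are the sets $\tau\setminus F$ where $\tau\subseteq G$ is a maximal independent subset of $G$ containing a maximal independent subset of $F$. $v_G\in\{0,1\}^n$ is the incidence vector of $G$. $\mathcal G\subseteq\mathcal L_M\setminus\{\emptyset\}$ is a building set if for every flat $X\ne\emptyset$, with $G_1,\dots,G_k$ the maximal elements of $\mathcal G$ contained in $X$, the join map $\prod_j[\emptyset,G_j]\to[\emptyset,X]$ is a poset isomorphism ($[A,B]$ denotes the interval of flats between $A$ and $B$); $[n]$ lies in every building set since $M$ is connected. $\mathcal S\subseteq\mathcal G$ is nested if the join of any $t\ge 2$ pairwise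 incomparable elements of $\mathcal S$ is not in $\mathcal G$. *)

theory Defs
  imports "HOL-Analysis.Analysis"
begin

text \<open>A matroid on the finite ground set UNIV of type 'a (playing the role of [n]),
  given by its set of bases.\<close>

definition matroid_bases :: "'a::finite set set \<Rightarrow> bool" where
  "matroid_bases B \<longleftrightarrow> B \<noteq> {} \<and>
     (\<forall>B1\<in>B. \<forall>B2\<in>B. \<forall>x\<in>B1 - B2. \<exists>y\<in>B2 - B1. insert y (B1 - {x}) \<in> B)"

definition indep :: "'a::finite set set \<Rightarrow> 'a set \<Rightarrow> bool" where
  "indep B X \<longleftrightarrow> (\<exists>b\<in>B. X \<subseteq> b)"

definition mrank :: "'a::finite set set \<Rightarrow> 'a set \<Rightarrow> nat" where
  "mrank B X = Max (card ` {Y. Y \<subseteq> X \<and> indep B Y})"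

definition mcl :: "'a::finite set set \<Rightarrow> 'a set \<Rightarrow> 'a set" where
  "mcl B X = {e. mrank B (insert e X) = mrank B X}"

definition flat :: "'a::finite set set \<Rightarrow> 'a set \<Rightarrow> bool" where
  "flat B F \<longleftrightarrow> mcl B F = F"

definition circuit :: "'a::finite set set \<Rightarrow> 'a set \<Rightarrow> bool" where
  "circuit B C \<longleftrightarrow> \<not> indep B C \<and> (\<forall>x\<in>C. indep B (C - {x}))"

definition connected_matroid :: "'a::finite set set \<Rightarrow> bool" where
  "connected_matroid B \<longleftrightarrow> (\<forall>e f. e \<noteq> f \<longrightarrow> (\<exists>C. circuit B C \<and> e \<in> C \<and> f \<in> C))"

definition weight_bases :: "'a::finite set set \<Rightarrow> real^'a \<Rightarrow> 'a set set" where
  "weight_bases B w = {b\<in>B. \<forall>b'\<in>B. (\<Sum>i\<in>b'. w $ i) \<le> (\<Sum>i\<in>b. w $ i)}"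

definition max_indep_in :: "'a::finite set set \<Rightarrow> 'a set \<Rightarrow> 'a set \<Rightarrow> bool" where
  "max_indep_in B X \<tau> \<longleftrightarrow> \<tau> \<subseteq> X \<and> indep B \<tau> \<and>
     (\<forall>\<tau>'. \<tau> \<subset> \<tau>' \<and> \<tau>' \<subseteq> X \<longrightarrow> \<not> indep B \<tau>')"

text \<open>Bases of the minor M[F,G] (restrict to G, contract F); ground set G - F.\<close>
definition minor_bases :: "'a::finite set set \<Rightarrow> 'a set \<Rightarrow> 'a set \<Rightarrow> 'a set set" where
  "minor_bases B F G = {\<tau> - F | \<tau>. max_indep_in B G \<tau> \<and> (\<exists>\<sigma>. max_indep_in B F \<sigma> \<and> \<sigma> \<subseteq> \<tau>)}"

definition flat_join :: "'a::finite set set \<Rightarrow> 'a set set \<Rightarrow> 'a set" where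
  "flat_join B \<X> = mcl B (\<Union>\<X>)"

definition maximal_in :: "'a set set \<Rightarrow> 'a set set" where
  "maximal_in \<S> = {G\<in>\<S>. \<not> (\<exists>H\<in>\<S>. G \<subset> H)}"

definition building_set :: "'a::finite set set \<Rightarrow> 'a set set \<Rightarrow> bool" where
  "building_set B \<G> \<longleftrightarrow> \<G> \<subseteq> {F. flat B F \<and> F \<noteq> {}} \<and>
     (\<forall>X. flat B X \<and> X \<noteq> {} \<longrightarrow>
        (let Mx = maximal_in {G\<in>\<G>. G \<subseteq> X};
             P = PiE Mx (\<lambda>G. {F. flat B F \<and> F \<subseteq> G});
             j = (\<lambda>f. flat_join B (f ` Mx))
         in bij_betw j P {Y. flat B Y \<and> Y \<subseteq> X} \<and>
            (\<forall>f\<in>P. \<forall>g\<in>P. (\<forall>G\<in>Mx. f G \<subseteq> g G) \<longleftrightarrow> j f \<subseteq> j g)))"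

definition nested :: "'a::finite set set \<Rightarrow> 'a set set \<Rightarrow> 'a set set \<Rightarrow> bool" where
  "nested B \<G> \<S> \<longleftrightarrow> \<S> \<subseteq> \<G> \<and>
     (\<forall>T\<subseteq>\<S>. card T \<ge> 2 \<and> (\<forall>G\<in>T. \<forall>H\<in>T. G \<subseteq> H \<longrightarrow> G = H) \<longrightarrow> flat_join B T \<notin> \<G>)"

definition G_minus :: "'a::finite set set \<Rightarrow> 'a set set \<Rightarrow> 'a set \<Rightarrow> 'a set" where
  "G_minus B \<S> G = (let L = {H\<in>\<S>. H \<subset> G} in if L = {} then {} else flat_join B (maximal_in L))"

definition incvec :: "'a::finite set \<Rightarrow> real^'a" where
  "incvec G = (\<chi> i. if i \<in> G then 1 else 0)"

definition nonneg_cone :: "(real^'a::finite) set \<Rightarrow> (real^'a) set" where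
  "nonneg_cone V = {\<Sum>v\<in>V. c v *\<^sub>R v | c. \<forall>v\<in>V. 0 \<le> c v}"

definition is_direct_sum :: "'a::finite set set \<Rightarrow> 'i set \<Rightarrow> ('i \<Rightarrow> 'a set) \<Rightarrow> ('i \<Rightarrow> 'a set set) \<Rightarrow> bool" where
  "is_direct_sum B I E Bs \<longleftrightarrow>
     (\<forall>i\<in>I. \<forall>j\<in>I. i \<noteq> j \<longrightarrow> E i \<inter> E j = {}) \<and> (\<Union>i\<in>I. E i) = UNIV \<and>
     B = {\<Union>i\<in>I. b i | b. \<forall>i\<in>I. b i \<in> Bs i}"

end

theory Submission
  imports Defs
begin

(* Write w = sum_G c_G v_G with all c_G > 0 (w is relatively interior in the cone).  The weight
   of a basis \<sigma> is then sum_G c_G |\<sigma> \<inter> G| <= sum_G c_G rk G, with equality iff \<sigma> \<inter> G is a basis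
   of G for every G in S; call such \<sigma> adapted.  In a connected matroid the building-set
   isomorphism [\<emptyset>, X] = \<Prod>_K [\<emptyset>, K] forces the factors K of a flat X to be disjoint and M|X to
   be their direct sum, and nestedness makes an antichain T of S exactly the factors of its
   join, which is then just \<Union>T.  Hence S is laminar, G^- is the disjoint union of the children
   of G, and by induction along S a set is an adapted basis iff it is a union of bases of the
   minors M[G^-, G] on the pieces G - G^-, which partition the ground set.  Adapted bases exist,
   so they are exactly the bases of M_w. *)

lemma sum_incvec_weight:
  "(\<Sum>i\<in>\<sigma>. (\<Sum>G\<in>S. c G *\<^sub>R incvec G) $ i) = (\<Sum>G\<in>S. c G * real (card (\<sigma> \<inter> G)))"
proof -
  have "(\<Sum>i\<in>\<sigma>. (\<Sum>G\<in>S. c G *\<^sub>R incvec G) $ i) = (\<Sum>i\<in>\<sigma>. \<Sum>G\<in>S. c G * of_bool (i \<in> G))"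
    unfolding incvec_def of_bool_def
    by (simp only: sum_component vector_scaleR_component vec_lambda_beta real_scaleR_def)
  also have "\<dots> = (\<Sum>G\<in>S. \<Sum>i\<in>\<sigma>. c G * of_bool (i \<in> G))"
    by (rule sum.swap)
  also have "\<dots> = (\<Sum>G\<in>S. c G * real (card (\<sigma> \<inter> G)))"
    by (simp add: sum_distrib_left[symmetric] sum.inter_restrict[symmetric] Int_commute)
  finally show ?thesis .
qed

lemma convex_nonneg_cone: "convex (nonneg_cone V)"
proof (rule convexI)
  fix x y :: "real^'a" and u v :: real
  assume "x \<in> nonneg_cone V" "y \<in> nonneg_cone V" and uv: "0 \<le> u" "0 \<le> v" "u + v = 1"
  then obtain c d where "\<forall>z\<in>V. 0 \<le> c z" "x = (\<Sum>z\<in>V. c z *\<^sub>R z)"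
    and "\<forall>z\<in>V. 0 \<le> d z" "y = (\<Sum>z\<in>V. d z *\<^sub>R z)"
    unfolding nonneg_cone_def by blast
  moreover have "u *\<^sub>R (\<Sum>z\<in>V. c z *\<^sub>R z) + v *\<^sub>R (\<Sum>z\<in>V. d z *\<^sub>R z)
      = (\<Sum>z\<in>V. (u * c z + v * d z) *\<^sub>R z)"
    by (simp add: scaleR_sum_right scaleR_add_left sum.distrib)
  ultimately show "u *\<^sub>R x + v *\<^sub>R y \<in> nonneg_cone V"
    unfolding nonneg_cone_def using uv by (auto intro!: exI[of _ "\<lambda>z. u * c z + v * d z"])
qed

text \<open>As w is relatively interior, moving it slightly away from p = sum V stays in the cone;
  solving back for w gives every generator a positive coefficient.\<close>
lemma rel_interior_nonneg_cone_pos_coeffs: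
  assumes "finite V" and w: "w \<in> rel_interior (nonneg_cone V)"
  obtains c where "\<forall>v\<in>V. 0 < c v" "w = (\<Sum>v\<in>V. c v *\<^sub>R v)"
proof -
  define p where "p = (\<Sum>v\<in>V. v)"
  have "p \<in> nonneg_cone V"
    unfolding nonneg_cone_def p_def by (auto intro!: exI[of _ "\<lambda>_. 1"])
  then have "p \<in> affine hull (nonneg_cone V)" by (simp add: hull_inc)
  then obtain m where m: "1 < m" "(1 - m) *\<^sub>R p + m *\<^sub>R w \<in> nonneg_cone V"
    using convex_rel_interior_if[OF convex_nonneg_cone w] by blast
  then obtain d where d: "\<forall>v\<in>V. 0 \<le> d v" "(1 - m) *\<^sub>R p + m *\<^sub>R w = (\<Sum>v\<in>V. d v *\<^sub>R v)"
    unfolding nonneg_cone_def by blast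
  have "m *\<^sub>R w = (\<Sum>v\<in>V. d v *\<^sub>R v) + (m - 1) *\<^sub>R p"
    using d(2) by (simp add: algebra_simps)
  also have "\<dots> = (\<Sum>v\<in>V. (d v + (m - 1)) *\<^sub>R v)"
    unfolding p_def by (simp add: scaleR_add_left sum.distrib scaleR_sum_right)
  finally have mw: "m *\<^sub>R w = (\<Sum>v\<in>V. (d v + (m - 1)) *\<^sub>R v)" .
  have "w = inverse m *\<^sub>R (m *\<^sub>R w)" using m(1) by simp
  also have "\<dots> = (\<Sum>v\<in>V. (inverse m * (d v + (m - 1))) *\<^sub>R v)"
    unfolding mw by (simp add: scaleR_sum_right)
  finally have "w = (\<Sum>v\<in>V. (inverse m * (d v + (m - 1))) *\<^sub>R v)" .
  moreover have "\<forall>v\<in>V. 0 < inverse m * (d v + (m - 1))"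
    using d(1) m(1) by (auto intro!: mult_pos_pos)
  ultimately show ?thesis using that[of "\<lambda>v. inverse m * (d v + (m - 1))"] by blast
qed

lemma inj_incvec: "inj incvec"
  by (rule injI) (auto simp: incvec_def vec_eq_iff split: if_splits)

lemma rel_interior_cone_incvec_pos_coeffs:
  fixes S :: "'a::finite set set"
  assumes "w \<in> rel_interior (nonneg_cone (incvec ` S))"
  obtains c where "\<forall>G\<in>S. 0 < c G" "w = (\<Sum>G\<in>S. c G *\<^sub>R incvec G)"
proof -
  obtain d where d: "\<forall>v\<in>incvec ` S. 0 < d v" "w = (\<Sum>v\<in>incvec ` S. d v *\<^sub>R v)"
    using rel_interior_nonneg_cone_pos_coeffs[OF finite_imageI[OF finite] assms] by blast
  have "w = (\<Sum>G\<in>S. d (incvec G) *\<^sub>R incvec G)"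
    unfolding d(2) by (simp add: sum.reindex[OF inj_on_subset[OF inj_incvec subset_UNIV]])
  moreover have "\<forall>G\<in>S. 0 < d (incvec G)" using d(1) by blast
  ultimately show ?thesis using that[of "\<lambda>G. d (incvec G)"] by blast
qed

lemma card_lt_2_singletonE:
  fixes A :: "'b::finite set"
  assumes "\<not> 2 \<le> card A" "A \<noteq> {}"
  obtains a where "A = {a}"
proof -
  have "card A \<noteq> 0" using assms(2) by simp
  then have "card A = 1" using assms(1) by linarith
  then obtain a where "A = {a}" by (rule card_1_singletonE)
  then show ?thesis by (rule that)
qed

definition antichain :: "'a set set \<Rightarrow> bool" where
  "antichain T \<longleftrightarrow> (\<forall>G\<in>T. \<forall>H\<in>T. G \<subseteq> H \<longrightarrow> G = H)"

locale matroid =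
  fixes B :: "'a::finite set set"
  assumes matroid_bases: "matroid_bases B"
begin

lemma bases_nonempty: "B \<noteq> {}"
  using matroid_bases unfolding matroid_bases_def by blast

lemma basis_exchange:
  "b1 \<in> B \<Longrightarrow> b2 \<in> B \<Longrightarrow> x \<in> b1 - b2 \<Longrightarrow> \<exists>y\<in>b2 - b1. insert y (b1 - {x}) \<in> B"
  using matroid_bases unfolding matroid_bases_def by blast

lemma indep_empty: "indep B {}"
  using bases_nonempty unfolding indep_def by blast

lemma indep_subset: "indep B J \<Longrightarrow> I \<subseteq> J \<Longrightarrow> indep B I"
  unfolding indep_def by blast

lemma indep_subset_base: "b \<in> B \<Longrightarrow> I \<subseteq> b \<Longrightarrow> indep B I"
  unfolding indep_def by blast

lemma bases_card_eq:
  assumes "b1 \<in> B" "b2 \<in> B"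
  shows "card b1 = card b2"
  using assms
proof (induction "card (b1 - b2)" arbitrary: b1)
  case 0
  have "b1 \<subseteq> b2" using 0 by auto
  moreover have "b2 \<subseteq> b1"
    using \<open>b1 \<subseteq> b2\<close> basis_exchange[OF \<open>b2 \<in> B\<close> \<open>b1 \<in> B\<close>] by blast
  ultimately show ?case by simp
next
  case (Suc n)
  then obtain x where x: "x \<in> b1 - b2"
    by (metis card.empty empty_iff equals0I nat.distinct(1))
  obtain y where y: "y \<in> b2 - b1" "insert y (b1 - {x}) \<in> B"
    using basis_exchange[OF Suc.prems x] by blast
  have "insert y (b1 - {x}) - b2 = (b1 - b2) - {x}" using x y by auto
  then have "card (insert y (b1 - {x})) = card b2"
    using Suc x y by (intro Suc.hyps) auto
  moreover have "card (insert y (b1 - {x})) = card b1"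
    using x y card_Suc_Diff1[of b1 x] by simp
  ultimately show ?case by simp
qed

text \<open>Among the bases containing J take one with fewest elements outside J \<union> b1; any such
  element could be exchanged against an element of b1.\<close>
lemma indep_extends_to_base_within:
  assumes "indep B J" "b1 \<in> B"
  obtains b2 where "b2 \<in> B" "J \<subseteq> b2" "b2 \<subseteq> J \<union> b1"
proof -
  obtain b0 where "b0 \<in> B" "J \<subseteq> b0" using assms(1) unfolding indep_def by blast
  then obtain b2 where b2: "b2 \<in> B" "J \<subseteq> b2"
    and least: "\<And>b. b \<in> B \<Longrightarrow> J \<subseteq> b \<Longrightarrow> card (b2 - (J \<union> b1)) \<le> card (b - (J \<union> b1))"
    using ex_has_least_nat[of "\<lambda>b. b \<in> B \<and> J \<subseteq> b" b0 "\<lambda>b. card (b - (J \<union> b1))"] by blast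
  have "b2 \<subseteq> J \<union> b1"
  proof (rule ccontr)
    assume "\<not> b2 \<subseteq> J \<union> b1"
    then obtain x where x: "x \<in> b2 - (J \<union> b1)" by blast
    then obtain y where y: "y \<in> b1 - b2" "insert y (b2 - {x}) \<in> B"
      using basis_exchange[OF b2(1) assms(2)] by blast
    have "card (b2 - (J \<union> b1)) \<le> card (insert y (b2 - {x}) - (J \<union> b1))"
      using least y x b2 by blast
    also have "insert y (b2 - {x}) - (J \<union> b1) = (b2 - (J \<union> b1)) - {x}" using y by auto
    also have "card \<dots> < card (b2 - (J \<union> b1))" using x by (intro card_Diff1_less) auto
    finally show False by simp
  qed
  with b2 that show ?thesis by blast
qed

lemma indep_augment:
  assumes I: "indep B I" and J: "indep B J" and less: "card I < card J"
  shows "\<exists>x\<in>J - I. indep B (insert x I)"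
proof (rule ccontr)
  assume no_aug: "\<not> ?thesis"
  obtain b1 where b1: "b1 \<in> B" "I \<subseteq> b1" using I unfolding indep_def by blast
  obtain b2 where b2: "b2 \<in> B" "J \<subseteq> b2" "b2 \<subseteq> J \<union> b1"
    using indep_extends_to_base_within[OF J b1(1)] by blast
  have "J \<inter> b1 \<subseteq> I"
    using no_aug b1 indep_subset_base[of b1 "insert _ I"] by blast
  then have "J - I \<subseteq> b2 - b1" using b2 by blast
  have "b1 - b2 \<subseteq> I - J"
  proof
    fix x assume x: "x \<in> b1 - b2"
    show "x \<in> I - J"
    proof (rule ccontr)
      assume "x \<notin> I - J"
      then have "x \<notin> I" using x b2 by blast
      obtain y where y: "y \<in> b2 - b1" "insert y (b1 - {x}) \<in> B"
        using basis_exchange[OF b1(1) b2(1) x] by blast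
      have "indep B (insert y I)"
        using y \<open>x \<notin> I\<close> b1 by (intro indep_subset_base[OF y(2)]) blast
      moreover have "y \<in> J - I" using y b1 b2 by blast
      ultimately show False using no_aug by blast
    qed
  qed
  have "card (J - I) \<le> card (b2 - b1)" using \<open>J - I \<subseteq> b2 - b1\<close> by (simp add: card_mono)
  also have "card (b2 - b1) = card (b1 - b2)"
    using bases_card_eq[OF b1(1) b2(1)] card_Int_Diff[of b1 b2] card_Int_Diff[of b2 b1]
    by (simp add: Int_commute)
  also have "\<dots> \<le> card (I - J)" using \<open>b1 - b2 \<subseteq> I - J\<close> by (simp add: card_mono)
  finally show False
    using less card_Int_Diff[of I J] card_Int_Diff[of J I] by (simp add: Int_commute)
qed

lemma card_le_rank: "Y \<subseteq> X \<Longrightarrow> indep B Y \<Longrightarrow> card Y \<le> mrank B X"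
  unfolding mrank_def by (rule Max_ge) auto

lemma rank_witness: obtains Y where "Y \<subseteq> X" "indep B Y" "card Y = mrank B X"
proof -
  have "{} \<in> {Y. Y \<subseteq> X \<and> indep B Y}" using indep_empty by simp
  then have "mrank B X \<in> card ` {Y. Y \<subseteq> X \<and> indep B Y}"
    unfolding mrank_def by (intro Max_in finite_imageI finite) blast
  then obtain Y where "Y \<subseteq> X" "indep B Y" "card Y = mrank B X" by auto
  with that show ?thesis .
qed

lemma rank_le_card: "mrank B X \<le> card X"
proof -
  obtain Y where "Y \<subseteq> X" "card Y = mrank B X" by (rule rank_witness)
  then show ?thesis using card_mono[of X Y] by simp
qed

lemma rank_mono: "X \<subseteq> Y \<Longrightarrow> mrank B X \<le> mrank B Y"
proof -
  assume "X \<subseteq> Y"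
  moreover obtain Z where "Z \<subseteq> X" "indep B Z" "card Z = mrank B X" by (rule rank_witness)
  ultimately show ?thesis using card_le_rank[of Z Y] by simp
qed

lemma rank_empty: "mrank B {} = 0"
  using rank_le_card[of "{}"] by simp

lemma indep_iff_rank_eq_card: "indep B X \<longleftrightarrow> mrank B X = card X"
proof
  assume "indep B X"
  then show "mrank B X = card X" using card_le_rank[of X X] rank_le_card[of X] by simp
next
  assume rank: "mrank B X = card X"
  obtain Y where "Y \<subseteq> X" "indep B Y" "card Y = mrank B X" by (rule rank_witness)
  moreover have "Y = X" using calculation rank by (intro card_subset_eq) auto
  ultimately show "indep B X" by simp
qed

lemma max_indep_in_iff: "max_indep_in B X I \<longleftrightarrow> I \<subseteq> X \<and> indep B I \<and> card I = mrank B X"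
proof
  assume max: "max_indep_in B X I"
  then have I: "I \<subseteq> X" "indep B I" unfolding max_indep_in_def by auto
  obtain Y where Y: "Y \<subseteq> X" "indep B Y" "card Y = mrank B X" by (rule rank_witness)
  have "card I = mrank B X"
  proof (rule ccontr)
    assume "card I \<noteq> mrank B X"
    then have "card I < card Y" using card_le_rank[OF I] Y by simp
    then obtain x where "x \<in> Y - I" "indep B (insert x I)"
      using indep_augment[OF I(2) Y(2)] by blast
    with max Y show False unfolding max_indep_in_def by blast
  qed
  with I show "I \<subseteq> X \<and> indep B I \<and> card I = mrank B X" by blast
next
  assume I: "I \<subseteq> X \<and> indep B I \<and> card I = mrank B X"
  have "\<not> indep B I'" if "I \<subset> I'" "I' \<subseteq> X" for I'
    using card_le_rank[of I' X] psubset_card_mono[of I' I] that I by fastforce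
  with I show "max_indep_in B X I" unfolding max_indep_in_def by blast
qed

lemma max_indep_in_extend:
  assumes "indep B I" "I \<subseteq> X"
  obtains J where "I \<subseteq> J" "max_indep_in B X J"
proof -
  let ?P = "\<lambda>J. I \<subseteq> J \<and> J \<subseteq> X \<and> indep B J"
  obtain J where J: "?P J" and greatest: "\<And>J'. ?P J' \<Longrightarrow> card X - card J \<le> card X - card J'"
    using ex_has_least_nat[of ?P I "\<lambda>J. card X - card J"] assms by blast
  have "\<not> indep B J'" if "J \<subset> J'" "J' \<subseteq> X" for J'
  proof
    assume "indep B J'"
    then have "card X - card J \<le> card X - card J'" using greatest J that by blast
    moreover have "card J < card J'" using that by (intro psubset_card_mono) auto
    moreover have "card J' \<le> card X" using that by (intro card_mono) auto
    ultimately show False by linarith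
  qed
  with J that show ?thesis unfolding max_indep_in_def by blast
qed

lemma max_indep_in_exists: obtains I where "max_indep_in B X I"
  using max_indep_in_extend[OF indep_empty] by blast

lemma max_indep_in_UNIV_base: "max_indep_in B UNIV I \<Longrightarrow> I \<in> B"
  unfolding max_indep_in_def indep_def by blast

lemma rank_submodular: "mrank B (X \<union> Y) + mrank B (X \<inter> Y) \<le> mrank B X + mrank B Y"
proof -
  obtain I where I: "I \<subseteq> X \<inter> Y" "indep B I" "card I = mrank B (X \<inter> Y)"
    by (rule rank_witness)
  then obtain J where "I \<subseteq> J" "max_indep_in B (X \<union> Y) J"
    using max_indep_in_extend[of I "X \<union> Y"] by blast
  then have J: "I \<subseteq> J" "J \<subseteq> X \<union> Y" "indep B J" "card J = mrank B (X \<union> Y)"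
    unfolding max_indep_in_iff by blast+
  have "(J \<inter> X) \<union> (J \<inter> Y) = J" "(J \<inter> X) \<inter> (J \<inter> Y) = J \<inter> X \<inter> Y"
    using J(2) by blast+
  then have "card (J \<inter> X) + card (J \<inter> Y) = card J + card (J \<inter> X \<inter> Y)"
    using card_Un_Int[of "J \<inter> X" "J \<inter> Y"] by simp
  moreover have "card I \<le> card (J \<inter> X \<inter> Y)"
    using I J by (intro card_mono) auto
  moreover have "card (J \<inter> X) \<le> mrank B X"
    using indep_subset[OF J(3)] by (intro card_le_rank) auto
  moreover have "card (J \<inter> Y) \<le> mrank B Y"
    using indep_subset[OF J(3)] by (intro card_le_rank) auto
  ultimately show ?thesis using I J by linarith
qed

lemma cl_superset: "X \<subseteq> mcl B X"
  unfolding mcl_def by (auto simp: insert_absorb)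

lemma rank_Un_cl: "Z \<subseteq> mcl B X \<Longrightarrow> mrank B (X \<union> Z) = mrank B X"
proof (induction Z rule: finite_induct[OF finite])
  case 1
  then show ?case by simp
next
  case (2 z Z)
  have IH: "mrank B (X \<union> Z) = mrank B X" and z: "mrank B (insert z X) = mrank B X"
    using 2 unfolding mcl_def by auto
  have "(X \<union> Z) \<union> insert z X = X \<union> insert z Z" by blast
  then have "mrank B (X \<union> insert z Z) + mrank B ((X \<union> Z) \<inter> insert z X)
      \<le> mrank B (X \<union> Z) + mrank B (insert z X)"
    using rank_submodular[of "X \<union> Z" "insert z X"] by simp
  moreover have "mrank B X \<le> mrank B ((X \<union> Z) \<inter> insert z X)" by (intro rank_mono) blast
  moreover have "mrank B X \<le> mrank B (X \<union> insert z Z)" by (intro rank_mono) blast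
  ultimately show ?case using IH z by linarith
qed

lemma rank_cl: "mrank B (mcl B X) = mrank B X"
  using rank_Un_cl[of "mcl B X" X] cl_superset[of X] by (simp add: Un_absorb1)

lemma cl_mono:
  assumes "X \<subseteq> Y"
  shows "mcl B X \<subseteq> mcl B Y"
proof
  fix e assume "e \<in> mcl B X"
  then have e: "mrank B (insert e X) = mrank B X" by (simp add: mcl_def)
  have "insert e X \<union> Y = insert e Y" using assms by blast
  then have "mrank B (insert e Y) + mrank B (insert e X \<inter> Y) \<le> mrank B (insert e X) + mrank B Y"
    using rank_submodular[of "insert e X" Y] by simp
  moreover have "mrank B X \<le> mrank B (insert e X \<inter> Y)" using assms by (intro rank_mono) blast
  moreover have "mrank B Y \<le> mrank B (insert e Y)" by (intro rank_mono) blast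
  ultimately show "e \<in> mcl B Y" using e by (simp add: mcl_def)
qed

lemma cl_idem: "mcl B (mcl B X) = mcl B X"
proof
  show "mcl B (mcl B X) \<subseteq> mcl B X"
  proof
    fix e assume "e \<in> mcl B (mcl B X)"
    then have "mrank B (insert e (mcl B X)) = mrank B X" using rank_cl[of X] by (simp add: mcl_def)
    moreover have "mrank B (insert e X) \<le> mrank B (insert e (mcl B X))"
      using cl_superset[of X] by (intro rank_mono) blast
    moreover have "mrank B X \<le> mrank B (insert e X)" by (intro rank_mono) blast
    ultimately show "e \<in> mcl B X" by (simp add: mcl_def)
  qed
qed (rule cl_superset)

lemma flat_cl: "flat B (mcl B X)"
  unfolding flat_def by (rule cl_idem)

lemma cl_least: "X \<subseteq> F \<Longrightarrow> flat B F \<Longrightarrow> mcl B X \<subseteq> F"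
  using cl_mono[of X F] unfolding flat_def by simp

lemma cl_subset_cl: "Z \<subseteq> mcl B X \<Longrightarrow> mcl B Z \<subseteq> mcl B X"
  using cl_least flat_cl by blast

lemma cl_UN_cl: "mcl B (\<Union>i\<in>A. mcl B (Y i)) = mcl B (\<Union>i\<in>A. Y i)"
proof
  have "mcl B (Y i) \<subseteq> mcl B (\<Union>i\<in>A. Y i)" if "i \<in> A" for i
    using that by (intro cl_mono) blast
  then show "mcl B (\<Union>i\<in>A. mcl B (Y i)) \<subseteq> mcl B (\<Union>i\<in>A. Y i)"
    by (intro cl_subset_cl) blast
  show "mcl B (\<Union>i\<in>A. Y i) \<subseteq> mcl B (\<Union>i\<in>A. mcl B (Y i))"
    using cl_superset by (intro cl_mono) blast
qed

lemma mem_cl_empty_iff: "e \<in> mcl B {} \<longleftrightarrow> \<not> indep B {e}"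
  unfolding mcl_def using indep_iff_rank_eq_card[of "{e}"] rank_empty rank_le_card[of "{e}"] by auto

lemma cl_singleton_exchange:
  assumes "y \<in> mcl B {x}" "y \<notin> mcl B {}"
  shows "x \<in> mcl B {y}"
proof -
  have "mrank B {x, y} = mrank B {x}" using assms(1) by (simp add: mcl_def insert_commute)
  moreover have "mrank B {x} \<le> 1" using rank_le_card[of "{x}"] by simp
  moreover have "mrank B {y} \<noteq> 0" using assms(2) rank_empty by (simp add: mcl_def)
  moreover have "mrank B {y} \<le> mrank B {x, y}" by (intro rank_mono) blast
  ultimately show ?thesis by (simp add: mcl_def)
qed

lemma circuit_elem_cl:
  assumes "circuit B C" "e \<in> C"
  shows "e \<in> mcl B (C - {e})"
proof -
  have "mrank B (C - {e}) = card C - 1"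
    using assms indep_iff_rank_eq_card unfolding circuit_def by simp
  moreover have "mrank B C < card C"
    using assms rank_le_card[of C] indep_iff_rank_eq_card[of C] unfolding circuit_def by fastforce
  moreover have "mrank B (C - {e}) \<le> mrank B C" by (intro rank_mono) blast
  moreover have "insert e (C - {e}) = C" using assms(2) by blast
  ultimately show ?thesis unfolding mcl_def by simp
qed

lemma indep_elem_not_cl:
  assumes "indep B J" "e \<in> J"
  shows "e \<notin> mcl B (J - {e})"
proof
  assume "e \<in> mcl B (J - {e})"
  then have "mrank B J = mrank B (J - {e})"
    unfolding mcl_def using assms(2) by (simp add: insert_absorb)
  moreover have "mrank B J = card J" "mrank B (J - {e}) = card J - 1"
    using assms indep_subset[of J "J - {e}"] by (auto simp: indep_iff_rank_eq_card)
  moreover have "card J > 0" using assms(2) card_gt_0_iff by fastforce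
  ultimately show False by linarith
qed

lemma dependent_contains_circuit:
  assumes "\<not> indep B D"
  obtains C where "C \<subseteq> D" "circuit B C"
proof -
  obtain C where C: "C \<subseteq> D" "\<not> indep B C"
    and least: "\<And>C'. C' \<subseteq> D \<Longrightarrow> \<not> indep B C' \<Longrightarrow> card C \<le> card C'"
    using ex_has_least_nat[of "\<lambda>C. C \<subseteq> D \<and> \<not> indep B C" D card] assms by blast
  have "indep B (C - {x})" if "x \<in> C" for x
    using least[of "C - {x}"] C card_Diff1_less[of C x] that by fastforce
  then have "circuit B C" using C(2) unfolding circuit_def by blast
  with C(1) show ?thesis by (rule that)
qed

lemma max_indep_in_spans:
  assumes "max_indep_in B X I"
  shows "X \<subseteq> mcl B I"
proof
  fix e assume e: "e \<in> X"
  show "e \<in> mcl B I"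
  proof (cases "e \<in> I")
    case True
    then show ?thesis using cl_superset by blast
  next
    case False
    have I: "I \<subseteq> X" "mrank B I = card I"
      using assms unfolding max_indep_in_iff by (auto simp: indep_iff_rank_eq_card)
    have "\<not> indep B (insert e I)"
      using assms e False unfolding max_indep_in_def by blast
    then have "mrank B (insert e I) < card I + 1"
      using rank_le_card[of "insert e I"] False indep_iff_rank_eq_card by fastforce
    moreover have "mrank B I \<le> mrank B (insert e I)" by (intro rank_mono) blast
    ultimately show ?thesis using I unfolding mcl_def by simp
  qed
qed

lemma spanning_max_indep_in:
  assumes "indep B I" "I \<subseteq> X" "X \<subseteq> mcl B I"
  shows "max_indep_in B X I"
proof -
  have "mrank B X \<le> card I"
    using rank_mono[OF assms(3)] rank_cl[of I] assms(1) indep_iff_rank_eq_card by simp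
  then show ?thesis using card_le_rank[OF assms(2,1)] assms unfolding max_indep_in_iff by simp
qed

text \<open>This makes the bases of the minor M[F,G] independent of the basis of F they are
  required to extend.\<close>
lemma max_indep_in_contract:
  assumes FG: "F \<subseteq> G" and tau: "max_indep_in B G \<tau>" and sigma: "max_indep_in B F \<sigma>"
    and "\<sigma> \<subseteq> \<tau>" and I: "max_indep_in B F I"
  shows "max_indep_in B G ((\<tau> - F) \<union> I)"
proof -
  have t: "\<tau> \<subseteq> G" "indep B \<tau>" "card \<tau> = mrank B G" using tau max_indep_in_iff by auto
  have s: "\<sigma> \<subseteq> F" "card \<sigma> = mrank B F" using sigma max_indep_in_iff by auto
  have i: "I \<subseteq> F" "card I = mrank B F" using I max_indep_in_iff by auto
  have "\<tau> \<inter> F = \<sigma>"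
  proof (rule ccontr)
    assume "\<tau> \<inter> F \<noteq> \<sigma>"
    then have "\<sigma> \<subset> \<tau> \<inter> F" using \<open>\<sigma> \<subseteq> \<tau>\<close> s(1) by blast
    moreover have "indep B (\<tau> \<inter> F)" using indep_subset[OF t(2)] by blast
    ultimately show False using sigma unfolding max_indep_in_def by blast
  qed
  then have tau_eq: "\<tau> = (\<tau> - F) \<union> \<sigma>" by blast
  have card_tau: "card \<tau> = card (\<tau> - F) + card \<sigma>"
    by (subst tau_eq, rule card_Un_disjoint) (use s in auto)
  have card_new: "card ((\<tau> - F) \<union> I) = card (\<tau> - F) + card I"
    by (rule card_Un_disjoint) (use i in auto)
  have "F \<subseteq> mcl B ((\<tau> - F) \<union> I)" "F \<subseteq> mcl B \<tau>"
    using max_indep_in_spans[OF I] max_indep_in_spans[OF sigma] cl_mono[of I] cl_mono[of \<sigma> \<tau>]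
      \<open>\<sigma> \<subseteq> \<tau>\<close> by blast+
  then have "mrank B ((\<tau> - F) \<union> I) = mrank B (((\<tau> - F) \<union> I) \<union> F)"
    "mrank B \<tau> = mrank B (\<tau> \<union> F)"
    using rank_Un_cl by auto
  moreover have "((\<tau> - F) \<union> I) \<union> F = \<tau> \<union> F" using i(1) by blast
  ultimately have "mrank B ((\<tau> - F) \<union> I) = mrank B \<tau>" by simp
  then have "indep B ((\<tau> - F) \<union> I)"
    using t s i card_tau card_new indep_iff_rank_eq_card by simp
  moreover have "(\<tau> - F) \<union> I \<subseteq> G" using t i FG by blast
  ultimately show ?thesis using card_tau card_new s i t unfolding max_indep_in_iff by simp
qed

lemma minor_bases_nonempty:
  assumes "F \<subseteq> G"
  shows "minor_bases B F G \<noteq> {}"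
proof -
  obtain \<sigma> where \<sigma>: "max_indep_in B F \<sigma>" by (rule max_indep_in_exists)
  then have "indep B \<sigma>" "\<sigma> \<subseteq> G" using assms unfolding max_indep_in_def by auto
  then obtain \<tau> where "\<sigma> \<subseteq> \<tau>" "max_indep_in B G \<tau>" by (rule max_indep_in_extend)
  with \<sigma> show ?thesis unfolding minor_bases_def by blast
qed

lemma minor_basesE:
  assumes "b \<in> minor_bases B F G"
  obtains \<tau> \<sigma> where "b = \<tau> - F" "max_indep_in B G \<tau>" "max_indep_in B F \<sigma>" "\<sigma> \<subseteq> \<tau>"
  using assms unfolding minor_bases_def by blast

lemma minor_bases_subset: "b \<in> minor_bases B F G \<Longrightarrow> b \<subseteq> G - F"
  by (erule minor_basesE) (auto simp: max_indep_in_def)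

lemma card_base_Int_le_rank: "\<sigma> \<in> B \<Longrightarrow> card (\<sigma> \<inter> G) \<le> mrank B G"
  using indep_subset_base by (intro card_le_rank) auto

lemma max_indep_in_base_Int_iff:
  "\<sigma> \<in> B \<Longrightarrow> max_indep_in B G (\<sigma> \<inter> G) \<longleftrightarrow> card (\<sigma> \<inter> G) = mrank B G"
  using indep_subset_base unfolding max_indep_in_iff by auto

lemma weight_bases_eq_adapted_bases:
  assumes pos: "\<forall>G\<in>S. 0 < c G" and w: "w = (\<Sum>G\<in>S. c G *\<^sub>R incvec G)"
    and adapted: "\<sigma>\<^sub>0 \<in> B" "\<forall>G\<in>S. max_indep_in B G (\<sigma>\<^sub>0 \<inter> G)"
  shows "weight_bases B w = {\<sigma>\<in>B. \<forall>G\<in>S. max_indep_in B G (\<sigma> \<inter> G)}"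
proof -
  define R where "R = (\<Sum>G\<in>S. c G * real (mrank B G))"
  have weight: "(\<Sum>i\<in>\<sigma>. w $ i) = (\<Sum>G\<in>S. c G * real (card (\<sigma> \<inter> G)))" for \<sigma>
    unfolding w by (rule sum_incvec_weight)
  have le_R: "(\<Sum>i\<in>\<sigma>. w $ i) \<le> R" if "\<sigma> \<in> B" for \<sigma>
    unfolding weight R_def using pos card_base_Int_le_rank[OF that]
    by (intro sum_mono mult_left_mono) auto
  have eq_R: "(\<Sum>i\<in>\<sigma>. w $ i) = R" if "\<sigma> \<in> B" "\<forall>G\<in>S. max_indep_in B G (\<sigma> \<inter> G)" for \<sigma>
    unfolding weight R_def using that max_indep_in_base_Int_iff by (intro sum.cong) auto
  have less_R: "(\<Sum>i\<in>\<sigma>. w $ i) < R"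
    if "\<sigma> \<in> B" "G \<in> S" "\<not> max_indep_in B G (\<sigma> \<inter> G)" for \<sigma> G
  proof -
    have "card (\<sigma> \<inter> G) < mrank B G"
      using that card_base_Int_le_rank max_indep_in_base_Int_iff by (simp add: order_less_le)
    then have "c G * real (card (\<sigma> \<inter> G)) < c G * real (mrank B G)" using pos that(2) by simp
    then show ?thesis
      unfolding weight R_def using that(1,2) pos card_base_Int_le_rank
      by (intro sum_strict_mono_ex1) (auto intro: mult_left_mono)
  qed
  show ?thesis
  proof (intro set_eqI iffI)
    fix \<sigma> assume "\<sigma> \<in> weight_bases B w"
    then have "\<sigma> \<in> B" "R \<le> (\<Sum>i\<in>\<sigma>. w $ i)"
      using eq_R[OF adapted] adapted(1) unfolding weight_bases_def by auto
    then show "\<sigma> \<in> {\<sigma>\<in>B. \<forall>G\<in>S. max_indep_in B G (\<sigma> \<inter> G)}"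
      using less_R by force
  next
    fix \<sigma> assume "\<sigma> \<in> {\<sigma>\<in>B. \<forall>G\<in>S. max_indep_in B G (\<sigma> \<inter> G)}"
    then show "\<sigma> \<in> weight_bases B w"
      unfolding weight_bases_def using eq_R le_R by simp
  qed
qed

end

locale matroid_building_set = matroid B for B :: "'a::finite set set" +
  fixes \<G> :: "'a set set"
  assumes connected: "connected_matroid B"
    and building: "building_set B \<G>"
begin

lemma building_set_flat: "G \<in> \<G> \<Longrightarrow> flat B G"
  and building_set_nonempty: "G \<in> \<G> \<Longrightarrow> G \<noteq> {}"
  using building unfolding building_set_def by auto

lemma indep_singleton:
  assumes "e \<noteq> e'"
  shows "indep B {e}"
proof -
  obtain C where "circuit B C" "e \<in> C" "e' \<in> C"
    using connected assms unfolding connected_matroid_def by blast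
  then show ?thesis using assms indep_subset[of "C - {e'}" "{e}"] unfolding circuit_def by blast
qed

lemma cl_empty_eq_empty:
  fixes e e' :: 'a
  assumes "e \<noteq> e'"
  shows "mcl B {} = {}"
proof -
  have "indep B {y}" for y
    using indep_singleton[of y e] indep_singleton[OF assms] by (cases "y = e") auto
  then show ?thesis using mem_cl_empty_iff by blast
qed

definition factors :: "'a set \<Rightarrow> 'a set set" where
  "factors X = maximal_in {G\<in>\<G>. G \<subseteq> X}"

lemma factorsD: "K \<in> factors X \<Longrightarrow> K \<in> \<G> \<and> K \<subseteq> X"
  unfolding factors_def maximal_in_def by blast

lemma factor_flat: "K \<in> factors X \<Longrightarrow> flat B K"
  using factorsD building_set_flat by blast

lemma ex_factor_superset:
  assumes "G \<in> \<G>" "G \<subseteq> X"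
  obtains K where "K \<in> factors X" "G \<subseteq> K"
proof -
  obtain K where "K \<in> {G\<in>\<G>. G \<subseteq> X}" "G \<subseteq> K" "\<forall>K'\<in>{G\<in>\<G>. G \<subseteq> X}. K \<subseteq> K' \<longrightarrow> K = K'"
    using finite_has_maximal2[of "{G\<in>\<G>. G \<subseteq> X}" G] assms by auto
  then have "K \<in> factors X" unfolding factors_def maximal_in_def by blast
  from this \<open>G \<subseteq> K\<close> show ?thesis by (rule that)
qed

lemma building_setD:
  assumes "flat B X" "X \<noteq> {}"
  defines "P \<equiv> PiE (factors X) (\<lambda>K. {F. flat B F \<and> F \<subseteq> K})"
  shows "bij_betw (\<lambda>f. mcl B (\<Union>K\<in>factors X. f K)) P {Y. flat B Y \<and> Y \<subseteq> X}"
    and "f \<in> P \<Longrightarrow> g \<in> P \<Longrightarrow>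
      (\<forall>K\<in>factors X. f K \<subseteq> g K) \<longleftrightarrow> mcl B (\<Union>K\<in>factors X. f K) \<subseteq> mcl B (\<Union>K\<in>factors X. g K)"
proof -
  have "\<forall>X. flat B X \<and> X \<noteq> {} \<longrightarrow>
      (let Mx = maximal_in {G\<in>\<G>. G \<subseteq> X};
           P = PiE Mx (\<lambda>G. {F. flat B F \<and> F \<subseteq> G});
           j = (\<lambda>f. flat_join B (f ` Mx))
       in bij_betw j P {Y. flat B Y \<and> Y \<subseteq> X} \<and>
          (\<forall>f\<in>P. \<forall>g\<in>P. (\<forall>G\<in>Mx. f G \<subseteq> g G) \<longleftrightarrow> j f \<subseteq> j g))"
    using building unfolding building_set_def by (rule conjunct2)
  with assms show "bij_betw (\<lambda>f. mcl B (\<Union>K\<in>factors X. f K)) P {Y. flat B Y \<and> Y \<subseteq> X}"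
    and "f \<in> P \<Longrightarrow> g \<in> P \<Longrightarrow>
      (\<forall>K\<in>factors X. f K \<subseteq> g K) \<longleftrightarrow> mcl B (\<Union>K\<in>factors X. f K) \<subseteq> mcl B (\<Union>K\<in>factors X. g K)"
    unfolding Let_def factors_def flat_join_def P_def by simp_all
qed

text \<open>The order-reflecting half of the isomorphism [\<emptyset>,X] = \<Prod>K [\<emptyset>,K], applied to the
  closures of arbitrary subsets of the factors.\<close>
lemma factor_join_reflects:
  assumes X: "flat B X" "X \<noteq> {}" and YZ: "\<forall>K\<in>factors X. Y K \<subseteq> K \<and> Z K \<subseteq> K"
    and le: "mcl B (\<Union>K\<in>factors X. Y K) \<subseteq> mcl B (\<Union>K\<in>factors X. Z K)" and K: "K \<in> factors X"
  shows "mcl B (Y K) \<subseteq> mcl B (Z K)"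
proof -
  let ?P = "PiE (factors X) (\<lambda>K. {F. flat B F \<and> F \<subseteq> K})"
  have in_P: "restrict (\<lambda>K. mcl B (W K)) (factors X) \<in> ?P" if "\<forall>K\<in>factors X. W K \<subseteq> K" for W
  proof -
    have "mcl B (W K) \<subseteq> K" if "K \<in> factors X" for K
      using cl_least[OF _ factor_flat[OF that]] that \<open>\<forall>K\<in>factors X. W K \<subseteq> K\<close> by blast
    then show ?thesis by (simp add: restrict_PiE_iff flat_cl)
  qed
  have "mcl B (\<Union>K\<in>factors X. restrict (\<lambda>K. mcl B (W K)) (factors X) K) = mcl B (\<Union>K\<in>factors X. W K)"
    for W
    using cl_UN_cl[of W "factors X"] by simp
  then have "(\<forall>K\<in>factors X. mcl B (Y K) \<subseteq> mcl B (Z K))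
      \<longleftrightarrow> mcl B (\<Union>K\<in>factors X. Y K) \<subseteq> mcl B (\<Union>K\<in>factors X. Z K)"
    using building_setD(2)[OF X in_P[of Y] in_P[of Z]] YZ by simp
  with le K show ?thesis by blast
qed

lemma factor_join_surj:
  assumes "flat B X" "X \<noteq> {}" "flat B Y" "Y \<subseteq> X"
  obtains F where "\<forall>K\<in>factors X. flat B (F K) \<and> F K \<subseteq> K" "mcl B (\<Union>K\<in>factors X. F K) = Y"
proof -
  have "Y \<in> (\<lambda>f. mcl B (\<Union>K\<in>factors X. f K)) ` PiE (factors X) (\<lambda>K. {F. flat B F \<and> F \<subseteq> K})"
    using building_setD(1)[OF assms(1,2)] assms(3,4) unfolding bij_betw_def by blast
  then obtain F where "F \<in> PiE (factors X) (\<lambda>K. {F. flat B F \<and> F \<subseteq> K})"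
    "mcl B (\<Union>K\<in>factors X. F K) = Y"
    by blast
  moreover from this(1) have "\<forall>K\<in>factors X. flat B (F K) \<and> F K \<subseteq> K"
    by (simp add: PiE_iff)
  ultimately show ?thesis using that by blast
qed

lemma factor_eq_join_below:
  assumes T: "T \<subseteq> \<G>" and X: "X = mcl B (\<Union>T)" "X \<noteq> {}" and K: "K \<in> factors X"
  shows "mcl B (\<Union>{s\<in>T. s \<subseteq> K}) = K"
proof -
  have flat_X: "flat B X" unfolding X(1) by (rule flat_cl)
  define below where "below K' = \<Union>{s\<in>T. s \<subseteq> K'}" for K'
  have "\<Union>T \<subseteq> (\<Union>K'\<in>factors X. below K')"
  proof
    fix x assume "x \<in> \<Union>T"
    then obtain s where s: "s \<in> T" "x \<in> s" by blast
    moreover have "s \<subseteq> X" using s(1) cl_superset unfolding X(1) by blast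
    then obtain K' where "K' \<in> factors X" "s \<subseteq> K'"
      using T s(1) ex_factor_superset by blast
    ultimately show "x \<in> (\<Union>K'\<in>factors X. below K')" unfolding below_def by blast
  qed
  then have "X \<subseteq> mcl B (\<Union>K'\<in>factors X. below K')"
    using cl_mono unfolding X(1) by blast
  moreover have "mcl B (\<Union>K'\<in>factors X. K') \<subseteq> X"
    using factorsD by (intro cl_least[OF _ flat_X]) blast
  ultimately have "mcl B (\<Union>K'\<in>factors X. K') \<subseteq> mcl B (\<Union>K'\<in>factors X. below K')"
    by (rule order_trans[rotated])
  moreover have "\<forall>K'\<in>factors X. K' \<subseteq> K' \<and> below K' \<subseteq> K'"
    unfolding below_def by blast
  ultimately have "mcl B K \<subseteq> mcl B (below K)"
    using factor_join_reflects[OF flat_X X(2), of "\<lambda>K'. K'" below K] K by simp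
  moreover have "mcl B (below K) \<subseteq> K"
    unfolding below_def by (rule cl_least[OF _ factor_flat[OF K]]) blast
  moreover have "mcl B K = K"
    using factor_flat[OF K] unfolding flat_def .
  ultimately show ?thesis unfolding below_def by blast
qed

lemma flat_eq_Union_factors:
  assumes no_loops: "mcl B {} = {}" and X: "flat B X" "X \<noteq> {}"
  shows "X = \<Union>(factors X)"
proof
  show "X \<subseteq> \<Union>(factors X)"
  proof
    fix x assume "x \<in> X"
    then have "mcl B {x} \<subseteq> X" using cl_least[OF _ X(1), of "{x}"] by blast
    then obtain F where F: "\<forall>K\<in>factors X. flat B (F K) \<and> F K \<subseteq> K"
      "mcl B (\<Union>K\<in>factors X. F K) = mcl B {x}"
      by (rule factor_join_surj[OF X flat_cl])
    have "(\<Union>K\<in>factors X. F K) \<noteq> {}"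
    proof
      assume "(\<Union>K\<in>factors X. F K) = {}"
      then have "mcl B {x} = mcl B {}" using F(2) by argo
      with no_loops cl_superset[of "{x}"] show False by blast
    qed
    then obtain K y where K: "K \<in> factors X" "y \<in> F K" by blast
    then have "y \<in> mcl B (\<Union>K\<in>factors X. F K)" using cl_superset by blast
    then have "y \<in> mcl B {x}" unfolding F(2) .
    moreover have "y \<notin> mcl B {}" using no_loops by simp
    ultimately have "x \<in> mcl B {y}" by (rule cl_singleton_exchange)
    also have "mcl B {y} \<subseteq> F K" using K F(1) cl_least[of "{y}" "F K"] by blast
    also have "F K \<subseteq> K" using F(1) K(1) by blast
    finally show "x \<in> \<Union>(factors X)" using K(1) by blast
  qed
qed (use factorsD in blast)

lemma factors_disjoint:
  assumes X: "flat B X" "X \<noteq> {}" and K: "K\<^sub>1 \<in> factors X" "K\<^sub>2 \<in> factors X" "K\<^sub>1 \<noteq> K\<^sub>2"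
  shows "K\<^sub>1 \<inter> K\<^sub>2 = {}"
proof (rule ccontr)
  assume "K\<^sub>1 \<inter> K\<^sub>2 \<noteq> {}"
  then obtain e where e: "e \<in> K\<^sub>1" "e \<in> K\<^sub>2" by blast
  have "\<exists>e'. e' \<noteq> e"
  proof (rule ccontr)
    assume "\<nexists>e'. e' \<noteq> e"
    then have "K\<^sub>1 = {e}" "K\<^sub>2 = {e}" using e by auto
    with K(3) show False by simp
  qed
  then have no_loops: "mcl B {} = {}" using cl_empty_eq_empty by blast
  define Y Z where "Y K = (if K = K\<^sub>1 then {e} else {})" and "Z K = (if K = K\<^sub>2 then {e} else {})"
    for K
  have "(\<Union>K\<in>factors X. Y K) = {e}" "(\<Union>K\<in>factors X. Z K) = {e}"
    using K unfolding Y_def Z_def by auto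
  moreover have "\<forall>K\<in>factors X. Y K \<subseteq> K \<and> Z K \<subseteq> K" using e unfolding Y_def Z_def by auto
  ultimately have "mcl B (Y K\<^sub>1) \<subseteq> mcl B (Z K\<^sub>1)"
    using factor_join_reflects[OF X, of Y Z K\<^sub>1] K(1) by simp
  then have "e \<in> mcl B {}" using K(3) cl_superset[of "{e}"] unfolding Y_def Z_def by auto
  with no_loops show False by simp
qed

end

locale matroid_nested_set = matroid_building_set B \<G> for B :: "'a::finite set set" and \<G> +
  fixes \<S> :: "'a set set"
  assumes nested: "nested B \<G> \<S>"
begin

lemma nested_subset: "\<S> \<subseteq> \<G>"
  using nested unfolding nested_def by blast

lemma nested_flat: "G \<in> \<S> \<Longrightarrow> flat B G"
  using nested_subset building_set_flat by blast

lemma nested_antichain_join_notin: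
  assumes "T \<subseteq> \<S>" "2 \<le> card T" "antichain T"
  shows "mcl B (\<Union>T) \<notin> \<G>"
proof -
  have "\<forall>T\<subseteq>\<S>. card T \<ge> 2 \<and> antichain T \<longrightarrow> flat_join B T \<notin> \<G>"
    using nested unfolding nested_def antichain_def by (rule conjunct2)
  with assms show ?thesis unfolding flat_join_def by blast
qed

lemma antichain_join_flat_nonempty:
  assumes "T \<subseteq> \<S>" "2 \<le> card T"
  shows "flat B (mcl B (\<Union>T))" "mcl B (\<Union>T) \<noteq> {}"
proof -
  have "T \<noteq> {}" using assms(2) by auto
  then obtain t where "t \<in> T" by blast
  then have "t \<noteq> {}" "t \<subseteq> mcl B (\<Union>T)"
    using assms(1) nested_subset building_set_nonempty[of t] cl_superset[of "\<Union>T"] by auto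
  then show "mcl B (\<Union>T) \<noteq> {}" by blast
qed (rule flat_cl)

text \<open>By nestedness the join of two or more members below a factor K cannot be K itself.\<close>
lemma antichain_subset_factors:
  assumes T: "T \<subseteq> \<S>" "2 \<le> card T" "antichain T"
  shows "T \<subseteq> factors (mcl B (\<Union>T))"
proof
  fix t assume "t \<in> T"
  define X where "X = mcl B (\<Union>T)"
  have T_\<G>: "T \<subseteq> \<G>" using T(1) nested_subset by blast
  have "t \<subseteq> X" using \<open>t \<in> T\<close> cl_superset unfolding X_def by blast
  then obtain K where K: "K \<in> factors X" "t \<subseteq> K"
    using T_\<G> \<open>t \<in> T\<close> ex_factor_superset by blast
  have K_eq: "mcl B (\<Union>{s\<in>T. s \<subseteq> K}) = K"
    using factor_eq_join_below[OF T_\<G> X_def _ K(1)] antichain_join_flat_nonempty[OF T(1,2)]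
    unfolding X_def by blast
  have "antichain {s\<in>T. s \<subseteq> K}"
    using T(3) unfolding antichain_def by blast
  then have "\<not> 2 \<le> card {s\<in>T. s \<subseteq> K}"
    using nested_antichain_join_notin[of "{s\<in>T. s \<subseteq> K}"] T(1) K_eq factorsD[OF K(1)] by auto
  then have "{s\<in>T. s \<subseteq> K} = {t}"
    using \<open>t \<in> T\<close> K(2) card_le_Suc0_iff_eq[of "{s\<in>T. s \<subseteq> K}"] by auto
  then have "K = t" using K_eq nested_flat \<open>t \<in> T\<close> T(1) unfolding flat_def by auto
  with K(1) show "t \<in> factors X" by simp
qed

lemma nested_laminar:
  assumes "G \<in> \<S>" "H \<in> \<S>" "G \<inter> H \<noteq> {}"
  shows "G \<subseteq> H \<or> H \<subseteq> G"
proof (rule ccontr)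
  assume incomparable: "\<not> (G \<subseteq> H \<or> H \<subseteq> G)"
  then have "G \<noteq> H" by blast
  then have T: "{G, H} \<subseteq> \<S>" "2 \<le> card {G, H}" "antichain {G, H}"
    using assms incomparable unfolding antichain_def by auto
  then have "G \<inter> H = {}"
    using factors_disjoint[OF antichain_join_flat_nonempty[OF T(1,2)]]
      antichain_subset_factors[OF T] incomparable by blast
  with assms(3) show False ..
qed

text \<open>A circuit C inside the union would make e \<in> C \<inter> t depend on (C - e) \<inter> t alone: the join
  of the pieces C \<inter> K is spanned by C - e, and the join is computed factorwise.\<close>
lemma antichain_union_indep:
  assumes T: "T \<subseteq> \<S>" "2 \<le> card T" "antichain T"
    and I: "\<forall>t\<in>T. I t \<subseteq> t \<and> indep B (I t)"
  shows "indep B (\<Union>t\<in>T. I t)"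
proof (rule ccontr)
  define X where "X = mcl B (\<Union>T)"
  note X = antichain_join_flat_nonempty[OF T(1,2), folded X_def]
  have T_factors: "T \<subseteq> factors X"
    unfolding X_def by (rule antichain_subset_factors[OF T])
  assume "\<not> indep B (\<Union>t\<in>T. I t)"
  then obtain C where C: "C \<subseteq> (\<Union>t\<in>T. I t)" "circuit B C"
    by (rule dependent_contains_circuit)
  have "C \<noteq> {}" using C(2) indep_empty unfolding circuit_def by auto
  then obtain e where "e \<in> C" by blast
  then obtain t where t: "t \<in> T" "e \<in> I t" using C(1) by blast
  have "C \<inter> t \<subseteq> I t"
  proof
    fix c assume c: "c \<in> C \<inter> t"
    then obtain s where s: "s \<in> T" "c \<in> I s" using C(1) by blast
    then have "c \<in> s \<inter> t" using c I by blast
    then have "s = t"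
      using factors_disjoint[OF X, of s t] T_factors s(1) t(1) by blast
    with s show "c \<in> I t" by simp
  qed
  then have indep_Ct: "indep B (C \<inter> t)" using I t(1) indep_subset by blast
  have C_covered: "C \<subseteq> (\<Union>K\<in>factors X. K)" using C(1) I T_factors by blast
  have "mcl B (\<Union>K\<in>factors X. C \<inter> K) \<subseteq> mcl B C"
    by (intro cl_mono) blast
  also have "\<dots> \<subseteq> mcl B (C - {e})"
    using circuit_elem_cl[OF C(2) \<open>e \<in> C\<close>] cl_superset[of "C - {e}"]
    by (intro cl_subset_cl) blast
  also have "\<dots> \<subseteq> mcl B (\<Union>K\<in>factors X. (C - {e}) \<inter> K)"
    using C_covered by (intro cl_mono) blast
  finally have "mcl B (C \<inter> t) \<subseteq> mcl B ((C - {e}) \<inter> t)"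
    using factor_join_reflects[OF X, of "\<lambda>K. C \<inter> K" "\<lambda>K. (C - {e}) \<inter> K" t] T_factors t(1)
    by auto
  moreover have "e \<in> C \<inter> t" using \<open>e \<in> C\<close> t I by blast
  moreover have "(C - {e}) \<inter> t = C \<inter> t - {e}" by blast
  ultimately have "e \<in> mcl B (C \<inter> t - {e})" using cl_superset[of "C \<inter> t"] by auto
  with indep_elem_not_cl[OF indep_Ct \<open>e \<in> C \<inter> t\<close>] show False ..
qed

text \<open>A factor K outside T would satisfy K \<subseteq> mcl {}, impossible without loops.\<close>
lemma factors_antichain_join:
  assumes T: "T \<subseteq> \<S>" "2 \<le> card T" "antichain T" and no_loops: "mcl B {} = {}"
  shows "factors (mcl B (\<Union>T)) = T"
proof
  define X where "X = mcl B (\<Union>T)"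
  note X = antichain_join_flat_nonempty[OF T(1,2), folded X_def]
  have T_factors: "T \<subseteq> factors X"
    unfolding X_def by (rule antichain_subset_factors[OF T])
  then show "T \<subseteq> factors (mcl B (\<Union>T))" unfolding X_def .
  show "factors (mcl B (\<Union>T)) \<subseteq> T"
  proof (rule ccontr)
    assume "\<not> factors (mcl B (\<Union>T)) \<subseteq> T"
    then obtain K where K: "K \<in> factors X" "K \<notin> T" unfolding X_def by blast
    define Z where "Z K' = (if K' \<in> T then K' else {})" for K'
    have "mcl B (\<Union>K'\<in>factors X. K') \<subseteq> X"
      using factorsD by (intro cl_least[OF _ X(1)]) blast
    also have "\<Union>T \<subseteq> (\<Union>K'\<in>factors X. Z K')"
      unfolding Z_def using T_factors by auto
    then have "X \<subseteq> mcl B (\<Union>K'\<in>factors X. Z K')"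
      using cl_mono unfolding X_def by blast
    finally have "mcl B K \<subseteq> mcl B (Z K)"
      using factor_join_reflects[OF X, of "\<lambda>K'. K'" Z K] K(1) unfolding Z_def by auto
    then have "K \<subseteq> {}" using K(2) no_loops cl_superset[of K] unfolding Z_def by auto
    then show False using K(1) factorsD building_set_nonempty by blast
  qed
qed

lemma antichain_join_eq_union:
  assumes T: "T \<subseteq> \<S>" "2 \<le> card T" "antichain T"
  shows "mcl B (\<Union>T) = \<Union>T"
proof -
  have "\<not> card T \<le> Suc 0" using T(2) by simp
  then obtain t\<^sub>1 t\<^sub>2 where t: "t\<^sub>1 \<in> T" "t\<^sub>2 \<in> T" "t\<^sub>1 \<noteq> t\<^sub>2"
    using card_le_Suc0_iff_eq[of T] by auto
  then obtain e where "e \<in> t\<^sub>1 - t\<^sub>2" using T(3) unfolding antichain_def by blast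
  moreover obtain e' where "e' \<in> t\<^sub>2"
    using t(2) T(1) nested_subset building_set_nonempty by blast
  ultimately have "e \<noteq> e'" by blast
  then have no_loops: "mcl B {} = {}" by (rule cl_empty_eq_empty)
  show ?thesis
    using flat_eq_Union_factors[OF no_loops antichain_join_flat_nonempty[OF T(1,2)]]
      factors_antichain_join[OF T no_loops] by simp
qed

definition children :: "'a set \<Rightarrow> 'a set set" where
  "children G = maximal_in {H\<in>\<S>. H \<subset> G}"

lemma children_mem: "H \<in> children G \<Longrightarrow> H \<in> \<S> \<and> H \<subset> G"
  unfolding children_def maximal_in_def by blast

lemma antichain_children: "antichain (children G)"
  unfolding antichain_def children_def maximal_in_def by blast

lemma ex_child_superset:
  assumes "K \<in> \<S>" "K \<subset> G"
  obtains H where "H \<in> children G" "K \<subseteq> H"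
proof -
  obtain H where H: "H \<in> {H\<in>\<S>. H \<subset> G}" "K \<subseteq> H"
    "\<forall>H'\<in>{H\<in>\<S>. H \<subset> G}. H \<subseteq> H' \<longrightarrow> H = H'"
    using finite_has_maximal2[of "{H\<in>\<S>. H \<subset> G}" K] assms by auto
  then have "H \<in> children G" unfolding children_def maximal_in_def by blast
  from this H(2) show ?thesis by (rule that)
qed

lemma children_empty_iff: "children G = {} \<longleftrightarrow> {H\<in>\<S>. H \<subset> G} = {}"
proof
  assume "children G = {}"
  show "{H\<in>\<S>. H \<subset> G} = {}"
  proof (rule ccontr)
    assume "{H\<in>\<S>. H \<subset> G} \<noteq> {}"
    then obtain K where "K \<in> \<S>" "K \<subset> G" by blast
    then obtain H where "H \<in> children G" by (rule ex_child_superset)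
    with \<open>children G = {}\<close> show False by simp
  qed
qed (use children_mem in blast)

text \<open>The closure in the definition of G^- adds nothing: the children of G are either a
  single flat or an antichain of at least two members of a nested set.\<close>
lemma G_minus_eq_Union_children: "G_minus B \<S> G = \<Union>(children G)"
proof (cases "children G = {}")
  case True
  then show ?thesis unfolding G_minus_def Let_def children_empty_iff[symmetric] by simp
next
  case False
  then have "{H\<in>\<S>. H \<subset> G} \<noteq> {}" using children_empty_iff by blast
  then have "G_minus B \<S> G = mcl B (\<Union>(children G))"
    unfolding G_minus_def Let_def flat_join_def children_def[symmetric] by (rule if_not_P)
  also have "\<dots> = \<Union>(children G)"
  proof (cases "2 \<le> card (children G)")
    case True
    have "children G \<subseteq> \<S>" using children_mem by blast
    from antichain_join_eq_union[OF this True antichain_children] show ?thesis .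
  next
    case False
    then obtain H where H: "children G = {H}"
      using \<open>children G \<noteq> {}\<close> by (rule card_lt_2_singletonE)
    then have "flat B H" using nested_flat children_mem by blast
    with H show ?thesis unfolding flat_def by simp
  qed
  finally show ?thesis .
qed

lemma G_minus_subset: "G_minus B \<S> G \<subseteq> G"
  using children_mem unfolding G_minus_eq_Union_children by blast

lemma subset_G_minus:
  assumes "K \<in> \<S>" "K \<subset> G"
  shows "K \<subseteq> G_minus B \<S> G"
proof -
  obtain H where "H \<in> children G" "K \<subseteq> H" using assms by (rule ex_child_superset)
  then show ?thesis unfolding G_minus_eq_Union_children by blast
qed

lemma children_union_indep:
  assumes "\<forall>H\<in>children G. I H \<subseteq> H \<and> indep B (I H)"
  shows "indep B (\<Union>H\<in>children G. I H)"
proof (cases "2 \<le> card (children G)")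
  case True
  have "children G \<subseteq> \<S>" using children_mem by blast
  from antichain_union_indep[OF this True antichain_children assms] show ?thesis .
next
  case False
  show ?thesis
  proof (cases "children G = {}")
    case True
    then show ?thesis using indep_empty by simp
  next
    case nonempty: False
    obtain H where "children G = {H}"
      using False nonempty by (rule card_lt_2_singletonE)
    then show ?thesis using assms by simp
  qed
qed

lemma pieces_disjoint:
  assumes "G \<in> \<S>" "H \<in> \<S>" "G \<noteq> H"
  shows "(G - G_minus B \<S> G) \<inter> (H - G_minus B \<S> H) = {}"
proof (rule ccontr)
  assume "(G - G_minus B \<S> G) \<inter> (H - G_minus B \<S> H) \<noteq> {}"
  then obtain x where x: "x \<in> G" "x \<notin> G_minus B \<S> G" "x \<in> H" "x \<notin> G_minus B \<S> H" by blast
  then have "G \<subset> H \<or> H \<subset> G" using nested_laminar[OF assms(1,2)] assms(3) by blast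
  then show False
    using subset_G_minus[OF assms(1), of H] subset_G_minus[OF assms(2), of G] x by blast
qed

lemma pieces_cover:
  assumes "UNIV \<in> \<S>"
  shows "(\<Union>G\<in>\<S>. G - G_minus B \<S> G) = UNIV"
proof -
  have "x \<in> (\<Union>G\<in>\<S>. G - G_minus B \<S> G)" for x
  proof -
    have "finite {G\<in>\<S>. x \<in> G}" by simp
    from finite_has_minimal2[OF this, of UNIV] assms
    obtain G where G: "G \<in> \<S>" "x \<in> G" "\<forall>G'\<in>{G\<in>\<S>. x \<in> G}. G' \<subseteq> G \<longrightarrow> G = G'"
      by auto
    then have "x \<notin> \<Union>(children G)" using children_mem by blast
    with G show ?thesis unfolding G_minus_eq_Union_children by blast
  qed
  then show ?thesis by blast
qed

lemma Int_Union_pieces: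
  assumes b: "\<forall>K\<in>\<S>. b K \<subseteq> K - G_minus B \<S> K" and G: "G \<in> \<S>"
  shows "(\<Union>K\<in>\<S>. b K) \<inter> G = b G \<union> (\<Union>H\<in>children G. (\<Union>K\<in>\<S>. b K) \<inter> H)"
proof (intro equalityI subsetI)
  fix x assume x: "x \<in> (\<Union>K\<in>\<S>. b K) \<inter> G"
  then obtain K where K: "K \<in> \<S>" "x \<in> b K" by blast
  then have xK: "x \<in> K" "x \<notin> G_minus B \<S> K" using b by blast+
  then have "K \<subset> G \<or> K = G \<or> G \<subset> K" using nested_laminar[OF K(1) G] x by blast
  moreover have "\<not> G \<subset> K" using subset_G_minus[OF G, of K] x xK by blast
  moreover have "x \<in> (\<Union>H\<in>children G. (\<Union>K\<in>\<S>. b K) \<inter> H)" if KG: "K \<subset> G"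
  proof -
    obtain H where "H \<in> children G" "K \<subseteq> H" using K(1) KG by (rule ex_child_superset)
    then show ?thesis using K xK by blast
  qed
  ultimately show "x \<in> b G \<union> (\<Union>H\<in>children G. (\<Union>K\<in>\<S>. b K) \<inter> H)" using K by blast
next
  fix x assume "x \<in> b G \<union> (\<Union>H\<in>children G. (\<Union>K\<in>\<S>. b K) \<inter> H)"
  then show "x \<in> (\<Union>K\<in>\<S>. b K) \<inter> G" using b G children_mem by blast
qed

text \<open>The children's parts form a basis of G^- = \<Union> children G, and a basis of the minor
  M[G^-,G] extends any basis of G^- to one of G.\<close>
lemma adapted_of_minor_bases:
  assumes b: "\<forall>G\<in>\<S>. b G \<in> minor_bases B (G_minus B \<S> G) G"
  shows "G \<in> \<S> \<Longrightarrow> max_indep_in B G ((\<Union>K\<in>\<S>. b K) \<inter> G)"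
proof (induction G rule: finite_psubset_induct[OF finite])
  case (1 G)
  define \<sigma> where "\<sigma> = (\<Union>K\<in>\<S>. b K)"
  have "b G \<in> minor_bases B (G_minus B \<S> G) G" using b \<open>G \<in> \<S>\<close> by blast
  then obtain \<tau> \<rho> where b_G: "b G = \<tau> - G_minus B \<S> G" and \<tau>: "max_indep_in B G \<tau>"
    and \<rho>: "max_indep_in B (G_minus B \<S> G) \<rho>" "\<rho> \<subseteq> \<tau>"
    by (rule minor_basesE)
  have b_sub: "\<forall>K\<in>\<S>. b K \<subseteq> K - G_minus B \<S> K"
    using b minor_bases_subset by blast
  define I where "I = (\<Union>H\<in>children G. \<sigma> \<inter> H)"
  have IH: "max_indep_in B H (\<sigma> \<inter> H)" if "H \<in> children G" for H
    using "1.IH" children_mem[OF that] unfolding \<sigma>_def by blast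
  have "indep B I"
    unfolding I_def using IH unfolding max_indep_in_def by (intro children_union_indep) blast
  moreover have "I \<subseteq> G_minus B \<S> G"
    unfolding I_def G_minus_eq_Union_children by blast
  moreover have "G_minus B \<S> G \<subseteq> mcl B I"
  proof -
    have "H \<subseteq> mcl B I" if "H \<in> children G" for H
      using max_indep_in_spans[OF IH[OF that]] cl_mono[of "\<sigma> \<inter> H" I] that
      unfolding I_def by blast
    then show ?thesis unfolding G_minus_eq_Union_children by blast
  qed
  ultimately have "max_indep_in B (G_minus B \<S> G) I" by (rule spanning_max_indep_in)
  from max_indep_in_contract[OF G_minus_subset \<tau> \<rho> this] show ?case
    using Int_Union_pieces[OF b_sub \<open>G \<in> \<S>\<close>] b_G unfolding \<sigma>_def I_def by simp
qed

lemma minor_bases_of_adapted: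
  assumes adapted: "\<forall>G\<in>\<S>. max_indep_in B G (\<sigma> \<inter> G)" and G: "G \<in> \<S>"
  shows "\<sigma> \<inter> (G - G_minus B \<S> G) \<in> minor_bases B (G_minus B \<S> G) G"
proof -
  have \<tau>: "max_indep_in B G (\<sigma> \<inter> G)" using adapted G by blast
  then have "indep B (\<sigma> \<inter> G)" unfolding max_indep_in_def by blast
  then have "indep B (\<sigma> \<inter> G_minus B \<S> G)"
    by (rule indep_subset) (use G_minus_subset[of G] in blast)
  moreover have "G_minus B \<S> G \<subseteq> mcl B (\<sigma> \<inter> G_minus B \<S> G)"
  proof -
    have "H \<subseteq> mcl B (\<sigma> \<inter> G_minus B \<S> G)" if H: "H \<in> children G" for H
    proof -
      have "H \<subseteq> mcl B (\<sigma> \<inter> H)"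
        using adapted children_mem[OF H] by (intro max_indep_in_spans) blast
      also have "\<dots> \<subseteq> mcl B (\<sigma> \<inter> G_minus B \<S> G)"
        using H unfolding G_minus_eq_Union_children by (intro cl_mono) blast
      finally show ?thesis .
    qed
    then show ?thesis unfolding G_minus_eq_Union_children by blast
  qed
  ultimately have "max_indep_in B (G_minus B \<S> G) (\<sigma> \<inter> G_minus B \<S> G)"
    by (intro spanning_max_indep_in) auto
  then have "\<sigma> \<inter> G - G_minus B \<S> G \<in> minor_bases B (G_minus B \<S> G) G"
    using \<tau> G_minus_subset[of G] unfolding minor_bases_def by blast
  moreover have "\<sigma> \<inter> (G - G_minus B \<S> G) = \<sigma> \<inter> G - G_minus B \<S> G" by blast
  ultimately show ?thesis by simp
qed

lemma adapted_bases_eq_direct_sum: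
  assumes "UNIV \<in> \<S>"
  shows "{\<sigma>\<in>B. \<forall>G\<in>\<S>. max_indep_in B G (\<sigma> \<inter> G)}
    = {\<Union>G\<in>\<S>. b G | b. \<forall>G\<in>\<S>. b G \<in> minor_bases B (G_minus B \<S> G) G}"
proof (intro equalityI subsetI)
  fix \<sigma> assume "\<sigma> \<in> {\<sigma>\<in>B. \<forall>G\<in>\<S>. max_indep_in B G (\<sigma> \<inter> G)}"
  then have "\<forall>G\<in>\<S>. \<sigma> \<inter> (G - G_minus B \<S> G) \<in> minor_bases B (G_minus B \<S> G) G"
    using minor_bases_of_adapted by blast
  moreover have "\<sigma> = (\<Union>G\<in>\<S>. \<sigma> \<inter> (G - G_minus B \<S> G))"
    using pieces_cover[OF assms] by blast
  ultimately show "\<sigma> \<in> {\<Union>G\<in>\<S>. b G | b. \<forall>G\<in>\<S>. b G \<in> minor_bases B (G_minus B \<S> G) G}"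
    by (intro CollectI exI[of _ "\<lambda>G. \<sigma> \<inter> (G - G_minus B \<S> G)"]) simp
next
  fix \<sigma> assume "\<sigma> \<in> {\<Union>G\<in>\<S>. b G | b. \<forall>G\<in>\<S>. b G \<in> minor_bases B (G_minus B \<S> G) G}"
  then obtain b where b: "\<forall>G\<in>\<S>. b G \<in> minor_bases B (G_minus B \<S> G) G" "\<sigma> = (\<Union>G\<in>\<S>. b G)"
    by blast
  have adapted: "\<forall>G\<in>\<S>. max_indep_in B G (\<sigma> \<inter> G)"
    unfolding b(2) using adapted_of_minor_bases[OF b(1)] by blast
  then have "max_indep_in B UNIV \<sigma>" using assms by auto
  then have "\<sigma> \<in> B" by (rule max_indep_in_UNIV_base)
  with adapted show "\<sigma> \<in> {\<sigma>\<in>B. \<forall>G\<in>\<S>. max_indep_in B G (\<sigma> \<inter> G)}" by blast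
qed

lemma adapted_base_exists:
  assumes "UNIV \<in> \<S>"
  obtains \<sigma> where "\<sigma> \<in> B" "\<forall>G\<in>\<S>. max_indep_in B G (\<sigma> \<inter> G)"
proof -
  have "\<forall>G\<in>\<S>. \<exists>b. b \<in> minor_bases B (G_minus B \<S> G) G"
    using minor_bases_nonempty[OF G_minus_subset] by blast
  then have "\<exists>b. \<forall>G\<in>\<S>. b G \<in> minor_bases B (G_minus B \<S> G) G" by (rule bchoice)
  then obtain b where "\<forall>G\<in>\<S>. b G \<in> minor_bases B (G_minus B \<S> G) G" by blast
  then have "(\<Union>G\<in>\<S>. b G) \<in> {\<Union>G\<in>\<S>. b G | b. \<forall>G\<in>\<S>. b G \<in> minor_bases B (G_minus B \<S> G) G}"
    by (intro CollectI exI[of _ b]) simp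
  then have "(\<Union>G\<in>\<S>. b G) \<in> B" "\<forall>G\<in>\<S>. max_indep_in B G ((\<Union>G\<in>\<S>. b G) \<inter> G)"
    unfolding adapted_bases_eq_direct_sum[OF assms, symmetric] by simp_all
  then show ?thesis by (rule that)
qed

end

theorem theorem4p4:
  fixes B :: "'a::finite set set" and \<G> \<S> :: "'a set set" and w :: "real^'a"
  assumes "matroid_bases B"
    and "connected_matroid B"
    and "building_set B \<G>"
    and "nested B \<G> \<S>"
    and "UNIV \<in> \<S>"
    and "w \<in> rel_interior (nonneg_cone (incvec ` \<S>))"
  shows "is_direct_sum (weight_bases B w) \<S> (\<lambda>G. G - G_minus B \<S> G)
           (\<lambda>G. minor_bases B (G_minus B \<S> G) G)"
proof -
  interpret matroid_nested_set B \<G> \<S>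
    using assms(1-4) by unfold_locales
  obtain c where c: "\<forall>G\<in>\<S>. 0 < c G" "w = (\<Sum>G\<in>\<S>. c G *\<^sub>R incvec G)"
    using assms(6) by (rule rel_interior_cone_incvec_pos_coeffs)
  obtain \<sigma>\<^sub>0 where "\<sigma>\<^sub>0 \<in> B" "\<forall>G\<in>\<S>. max_indep_in B G (\<sigma>\<^sub>0 \<inter> G)"
    using assms(5) by (rule adapted_base_exists)
  then have "weight_bases B w = {\<sigma>\<in>B. \<forall>G\<in>\<S>. max_indep_in B G (\<sigma> \<inter> G)}"
    by (rule weight_bases_eq_adapted_bases[OF c])
  also have "\<dots> = {\<Union>G\<in>\<S>. b G | b. \<forall>G\<in>\<S>. b G \<in> minor_bases B (G_minus B \<S> G) G}"
    using assms(5) by (rule adapted_bases_eq_direct_sum)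
  finally show ?thesis
    unfolding is_direct_sum_def using pieces_cover[OF assms(5)]
    by (intro conjI ballI impI pieces_disjoint)
qed

end
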